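(* Let $(X_n)_{n\ge0}$ be a homogeneous Markov chain on $\mathbb{R}^d$ satisfying assumptions $(\mathcal{A}_1)$ and $(\mathcal{A}_2)$ below. Then for any $0<\epsilon<\epsilon_0$ and any integer $k\ge1$, $$\sup_{x\in\mathbb{M}}\mathbb{P}_\mu\Big(\min_{1\le i\le k}\|X_i-x\|>\epsilon\Big)\le(1-\kappa\epsilon^bV_d)^k.$$
   Context: $(\mathcal{A}_1)$: the chain has an invariant probability measure $\mu$ with compact support $\mathbb{M}$. $(\mathcal{A}_2)$: the transition kernel $K(x,\cdot)=\mathbb{P}(X_1\in\cdot\mid X_0=x)$, $x\in\mathbb{M}$, satisfies $K(x,dy)=k(x,y)\nu(dy)$ for a positive measure $\nu$ on $\mathbb{M}$ and a positive function $k$; for some $b>0$ and $\epsilon_0>0$, $V_d:=\inf_{x\in\mathbb{M}}\inf_{0<\epsilon<\epsilon_0}\epsilon^{-b}\nu(B(x,\epsilon)\cap\mathbb{M})>0$; and there is $\kappa>0$ with $\inf_{x,y\in\mathbb{M}}k(x,y)\ge\kappa$. $B(x,\epsilon)$ is the closed Euclidean ball. $\mathbb{P}_\mu$ denotes probability when $X_0$ has distribution $\mu$. *)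

theory Defs
  imports "HOL-Probability.Probability"
begin

text \<open>Finite-dimensional distributions of a homogeneous Markov chain with kernel K:
  mc_fdd K [A1,...,An] x = P_x(X_1 in A1, ..., X_n in An).\<close>
fun mc_fdd :: "('a \<Rightarrow> 'a measure) \<Rightarrow> 'a set list \<Rightarrow> 'a \<Rightarrow> ennreal" where
  "mc_fdd K [] x = 1"
| "mc_fdd K (A # As) x = (\<integral>\<^sup>+ y. indicator A y * mc_fdd K As y \<partial>K x)"

definition markov_chain ::
  "'w measure \<Rightarrow> (nat \<Rightarrow> 'w \<Rightarrow> 'a::topological_space) \<Rightarrow> 'a measure \<Rightarrow> ('a \<Rightarrow> 'a measure) \<Rightarrow> bool" where
  "markov_chain P X mu K \<longleftrightarrow>
     prob_space P \<and> (\<forall>n. X n \<in> borel_measurable P) \<and>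
     (\<forall>x. prob_space (K x) \<and> sets (K x) = sets borel) \<and>
     (\<forall>A. A \<in> sets borel \<longrightarrow> (\<lambda>x. emeasure (K x) A) \<in> borel_measurable borel) \<and>
     (\<forall>A0 As. A0 \<in> sets borel \<and> set As \<subseteq> sets borel \<longrightarrow>
        emeasure P {w \<in> space P. X 0 w \<in> A0 \<and> (\<forall>i<length As. X (Suc i) w \<in> As ! i)}
        = (\<integral>\<^sup>+ x. indicator A0 x * mc_fdd K As x \<partial>mu))"

definition msupport :: "'a::metric_space measure \<Rightarrow> 'a set" where
  "msupport mu = {x. \<forall>e>0. emeasure mu (cball x e) > 0}"

definition invariant_prob :: "'a::topological_space measure \<Rightarrow> ('a \<Rightarrow> 'a measure) \<Rightarrow> bool" where
  "invariant_prob mu K \<longleftrightarrow> prob_space mu \<and> sets mu = sets borel \<and>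
     (\<forall>A\<in>sets borel. emeasure mu A = (\<integral>\<^sup>+ x. emeasure (K x) A \<partial>mu))"

end

theory Submission
  imports Defs
begin

text \<open>From any point of \<open>M\<close> the chain jumps into \<open>B(x,\<epsilon>)\<close> with probability at least
  \<open>\<kappa> \<nu>(B(x,\<epsilon>) \<inter> M) \<ge> \<kappa> \<epsilon>\<^sup>b V\<^sub>d\<close>, so a single step avoids the ball with probability at most
  \<open>q = 1 - \<kappa> \<epsilon>\<^sup>b V\<^sub>d\<close>. Since \<open>\<mu>\<close> and every \<open>K(y,\<cdot>)\<close>, \<open>y \<in> M\<close>, are concentrated on \<open>M\<close>, the chain
  stays in \<open>M\<close>, and conditioning on the past step by step gives the bound \<open>q\<^sup>k\<close>.\<close>

definition lower_volume_growth ::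
  "'a::metric_space measure \<Rightarrow> 'a set \<Rightarrow> real \<Rightarrow> real \<Rightarrow> real" where
  "lower_volume_growth nu M b eps0 =
     (INF x\<in>M. INF e\<in>{0<..<eps0}. measure nu (cball x e \<inter> M) / e powr b)"

lemma lower_volume_growth_le:
  assumes "x \<in> M" and "0 < e" and "e < eps0"
  shows "e powr b * lower_volume_growth nu M b eps0 \<le> measure nu (cball x e \<inter> M)"
proof -
  have inner_nonneg: "0 \<le> (INF e\<in>{0<..<eps0}. measure nu (cball y e \<inter> M) / e powr b)" for y
    using assms by (intro cINF_greatest) auto
  have "lower_volume_growth nu M b eps0
      \<le> (INF e\<in>{0<..<eps0}. measure nu (cball x e \<inter> M) / e powr b)"
    unfolding lower_volume_growth_def using assms(1) inner_nonneg
    by (intro cINF_lower bdd_belowI[of _ 0]) auto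
  also have "\<dots> \<le> measure nu (cball x e \<inter> M) / e powr b"
    using assms(2,3) by (intro cINF_lower bdd_belowI[of _ 0]) auto
  finally show ?thesis
    using assms(2) by (simp add: field_simps)
qed

lemma AE_in_msupport:
  fixes mu :: "'a::{metric_space,second_countable_topology} measure"
  assumes sets_mu: "sets mu = sets borel"
  shows "AE x in mu. x \<in> msupport mu"
proof -
  define F where "F = {ball x e | x e. e > 0 \<and> emeasure mu (cball x e) = 0}"
  have "open S" if "S \<in> F" for S
    using that unfolding F_def by auto
  then obtain F' where F': "F' \<subseteq> F" "countable F'" "\<Union>F' = \<Union>F"
    by (rule Lindelof)
  have "UNIV - msupport mu \<subseteq> \<Union>F"
  proof
    fix x assume "x \<in> UNIV - msupport mu"
    then obtain e where "e > 0" "emeasure mu (cball x e) = 0"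
      unfolding msupport_def by (auto simp: not_less)
    then have "ball x e \<in> F"
      unfolding F_def by auto
    with \<open>e > 0\<close> show "x \<in> \<Union>F"
      by (meson UnionI centre_in_ball)
  qed
  moreover have "S \<in> null_sets mu" if "S \<in> F" for S
  proof -
    from that obtain x e where S: "S = ball x e" "emeasure mu (cball x e) = 0"
      unfolding F_def by auto
    then have "cball x e \<in> null_sets mu"
      using sets_mu by (simp add: null_sets_def)
    moreover have "ball x e \<in> sets mu"
      using sets_mu by simp
    ultimately show ?thesis
      using S(1) null_sets_subset ball_subset_cball by blast
  qed
  then have "(\<Union>S\<in>F'. S) \<in> null_sets mu"
    using F' by (intro null_sets_UN') auto
  ultimately show ?thesis
    using F'(3) by (intro AE_I'[of "\<Union>F"]) auto
qed

lemma emeasure_density_ge_const: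
  assumes "f \<in> borel_measurable nu" and "A \<in> sets nu" and "\<forall>y\<in>A. c \<le> f y"
  shows "c * emeasure nu A \<le> emeasure (density nu f) A"
proof -
  have "c * emeasure nu A = (\<integral>\<^sup>+ y. c * indicator A y \<partial>nu)"
    using assms(2) by (simp add: nn_integral_cmult_indicator)
  also have "\<dots> \<le> (\<integral>\<^sup>+ y. f y * indicator A y \<partial>nu)"
    using assms(3) by (intro nn_integral_mono) (auto simp: indicator_def)
  also have "\<dots> = emeasure (density nu f) A"
    using assms(1,2) by (simp add: emeasure_density)
  finally show ?thesis .
qed

lemma measure_density_ge_const:
  fixes f :: "'a \<Rightarrow> real"
  assumes fin: "finite_measure (density nu (\<lambda>y. ennreal (f y)))"
    and f: "f \<in> borel_measurable nu" and A: "A \<in> sets nu"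
    and lb: "\<forall>y\<in>A. c \<le> f y" and c: "0 < c"
  shows "c * measure nu A \<le> measure (density nu (\<lambda>y. ennreal (f y))) A"
proof -
  interpret finite_measure "density nu (\<lambda>y. ennreal (f y))" by (fact fin)
  have le: "ennreal c * emeasure nu A \<le> emeasure (density nu (\<lambda>y. ennreal (f y))) A"
    using f A lb by (intro emeasure_density_ge_const) (auto intro: ennreal_leI)
  then have "emeasure nu A \<noteq> \<infinity>"
    using c emeasure_finite[of A] by (auto simp: ennreal_mult_top top_unique)
  then have "ennreal (c * measure nu A) = ennreal c * emeasure nu A"
    using c by (simp add: emeasure_eq_ennreal_measure ennreal_mult)
  with le have "ennreal (c * measure nu A) \<le> ennreal (measure (density nu (\<lambda>y. ennreal (f y))) A)"
    by (simp add: emeasure_eq_measure)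
  then show ?thesis
    by (simp add: ennreal_le_iff)
qed

lemma prob_compl_density_le:
  fixes f :: "'a \<Rightarrow> real"
  assumes prob: "prob_space (density nu (\<lambda>y. ennreal (f y)))"
    and f: "f \<in> borel_measurable nu" and C: "C \<in> sets nu" and S: "S \<in> sets nu"
    and lb: "\<forall>y\<in>S. c \<le> f y" and c: "0 < c"
  shows "measure (density nu (\<lambda>y. ennreal (f y))) (space nu - C) \<le> 1 - c * measure nu (C \<inter> S)"
proof -
  interpret prob_space "density nu (\<lambda>y. ennreal (f y))" by (fact prob)
  have "c * measure nu (C \<inter> S) \<le> prob (C \<inter> S)"
    using f C S lb c finite_measure_axioms by (intro measure_density_ge_const) auto
  also have "\<dots> \<le> prob C"
    using C by (intro finite_measure_mono) auto
  finally show ?thesis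
    using prob_compl[of C] C by simp
qed

lemma mc_fdd_replicate_le:
  assumes sets_K: "\<forall>y\<in>M. sets (K y) = sets borel"
    and stay: "\<forall>y\<in>M. AE z in K y. z \<in> M"
    and step: "\<forall>y\<in>M. emeasure (K y) D \<le> ennreal q"
    and D: "D \<in> sets borel" and q: "0 \<le> q"
  shows "y \<in> M \<Longrightarrow> mc_fdd K (replicate n D) y \<le> ennreal (q ^ n)"
proof (induction n arbitrary: y)
  case 0
  then show ?case by simp
next
  case (Suc n)
  have "mc_fdd K (replicate (Suc n) D) y = (\<integral>\<^sup>+ z. indicator D z * mc_fdd K (replicate n D) z \<partial>K y)"
    by simp
  also have "\<dots> \<le> (\<integral>\<^sup>+ z. ennreal (q ^ n) * indicator D z \<partial>K y)"
    using stay Suc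
    by (intro nn_integral_mono_AE) (auto elim!: eventually_mono simp: indicator_def mult.commute)
  also have "\<dots> = ennreal (q ^ n) * emeasure (K y) D"
    using D sets_K Suc.prems by (simp add: nn_integral_cmult_indicator)
  also have "\<dots> \<le> ennreal (q ^ n) * ennreal q"
    using step Suc.prems by (intro mult_left_mono) auto
  also have "\<dots> = ennreal (q ^ Suc n)"
    using q by (simp add: ennreal_mult[symmetric] mult.commute)
  finally show ?case .
qed

lemma markov_chain_prob_avoid_le:
  assumes chain: "markov_chain P X mu K" and mu: "prob_space mu"
    and start: "AE x in mu. x \<in> M"
    and stay: "\<forall>y\<in>M. AE z in K y. z \<in> M"
    and step: "\<forall>y\<in>M. measure (K y) D \<le> q"
    and D: "D \<in> sets borel" and q: "0 \<le> q"
  shows "measure P {w \<in> space P. \<forall>i<k. X (Suc i) w \<in> D} \<le> q ^ k"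
proof -
  have P: "prob_space P" and K: "\<forall>x. prob_space (K x) \<and> sets (K x) = sets borel"
    and path_law: "\<And>A0 As. A0 \<in> sets borel \<Longrightarrow> set As \<subseteq> sets borel \<Longrightarrow>
        emeasure P {w \<in> space P. X 0 w \<in> A0 \<and> (\<forall>i<length As. X (Suc i) w \<in> As ! i)}
        = (\<integral>\<^sup>+ x. indicator A0 x * mc_fdd K As x \<partial>mu)"
    using chain unfolding markov_chain_def by auto
  interpret P: prob_space P by (fact P)
  have "\<forall>y\<in>M. emeasure (K y) D \<le> ennreal q"
    using K step by (simp add: finite_measure.emeasure_eq_measure[OF prob_space.finite_measure] ennreal_leI)
  then have fdd_le: "\<forall>y\<in>M. mc_fdd K (replicate k D) y \<le> ennreal (q ^ k)"
    using K stay D q by (blast intro: mc_fdd_replicate_le)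
  have "emeasure P {w \<in> space P. \<forall>i<k. X (Suc i) w \<in> D}
      = emeasure P {w \<in> space P. X 0 w \<in> UNIV \<and>
          (\<forall>i<length (replicate k D). X (Suc i) w \<in> replicate k D ! i)}"
    by simp
  also have "\<dots> = (\<integral>\<^sup>+ y. indicator UNIV y * mc_fdd K (replicate k D) y \<partial>mu)"
    using D by (intro path_law) auto
  also have "\<dots> \<le> (\<integral>\<^sup>+ y. ennreal (q ^ k) \<partial>mu)"
    using start fdd_le by (intro nn_integral_mono_AE) (auto elim!: eventually_mono)
  also have "\<dots> = ennreal (q ^ k)"
    using mu by (simp add: prob_space.emeasure_space_1)
  finally show ?thesis
    using q by (simp add: P.emeasure_eq_measure)
qed

lemma Min_image_gt_iff:
  fixes f :: "nat \<Rightarrow> real"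
  assumes "k \<ge> 1"
  shows "eps < Min (f ` {1..k}) \<longleftrightarrow> (\<forall>i<k. eps < f (Suc i))"
proof -
  have "{1..k} = Suc ` {..<k}"
    by (simp add: image_Suc_lessThan)
  then show ?thesis
    using assms by (subst Min_gr_iff) auto
qed

lemma density_kernel_bounds:
  fixes K :: "'a::topological_space \<Rightarrow> 'a measure" and kd :: "'a \<Rightarrow> 'a \<Rightarrow> real"
  assumes K: "\<forall>x. prob_space (K x)"
    and nu_sets: "sets nu = sets borel" and nu_M: "AE z in nu. z \<in> M" and M: "M \<in> sets borel"
    and kd_meas: "\<forall>x\<in>M. kd x \<in> borel_measurable borel"
    and dens: "\<forall>x\<in>M. K x = density nu (\<lambda>z. ennreal (kd x z))"
    and kappa_lb: "\<forall>x\<in>M. \<forall>z\<in>M. kappa \<le> kd x z" and kappa: "0 < kappa"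
    and y: "y \<in> M"
  shows "AE z in K y. z \<in> M"
    and "C \<in> sets borel \<Longrightarrow> measure (K y) (UNIV - C) \<le> 1 - kappa * measure nu (C \<inter> M)"
proof -
  have K_y: "K y = density nu (\<lambda>z. ennreal (kd y z))"
    using dens y by blast
  have kd_y: "kd y \<in> borel_measurable nu"
    using kd_meas y by (simp add: measurable_cong_sets[OF nu_sets refl])
  then have "(\<lambda>z. ennreal (kd y z)) \<in> borel_measurable nu"
    by (rule measurable_compose[OF _ measurable_ennreal])
  then show "AE z in K y. z \<in> M"
    unfolding K_y using nu_M by (subst AE_density) (auto elim: eventually_mono)
  have "prob_space (density nu (\<lambda>z. ennreal (kd y z)))"
    using K K_y by metis
  moreover assume "C \<in> sets borel"
  ultimately have "measure (K y) (space nu - C) \<le> 1 - kappa * measure nu (C \<inter> M)"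
    unfolding K_y using kd_y nu_sets M kappa_lb kappa y
    by (intro prob_compl_density_le) auto
  then show "measure (K y) (UNIV - C) \<le> 1 - kappa * measure nu (C \<inter> M)"
    using sets_eq_imp_space_eq[OF nu_sets] by simp
qed

theorem lemma7p2:
  fixes P :: "'w measure"
    and X :: "nat \<Rightarrow> 'w \<Rightarrow> real ^ 'd"
    and mu nu :: "(real ^ 'd) measure"
    and K :: "real ^ 'd \<Rightarrow> (real ^ 'd) measure"
    and kd :: "real ^ 'd \<Rightarrow> real ^ 'd \<Rightarrow> real"
    and M :: "(real ^ 'd) set"
    and b eps0 kappa eps :: real
    and k :: nat
  assumes chain: "markov_chain P X mu K"
    and inv: "invariant_prob mu K"
    and supp: "M = msupport mu"
    and cpt: "compact M"
    and nu_sets: "sets nu = sets borel"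
    and nu_on_M: "emeasure nu (UNIV - M) = 0"
    and kd_meas: "\<forall>x\<in>M. kd x \<in> borel_measurable borel"
    and kd_pos: "\<forall>x\<in>M. \<forall>y\<in>M. kd x y > 0"
    and dens: "\<forall>x\<in>M. K x = density nu (\<lambda>y. ennreal (kd x y))"
    and b_pos: "b > 0" and eps0_pos: "eps0 > 0"
    and Vd_pos: "(INF x\<in>M. INF e\<in>{0<..<eps0}. measure nu (cball x e \<inter> M) / e powr b) > 0"
    and kappa_pos: "kappa > 0"
    and kappa_lb: "\<forall>x\<in>M. \<forall>y\<in>M. kd x y \<ge> kappa"
    and eps: "0 < eps" "eps < eps0"
    and k: "k \<ge> 1"
  shows "(SUP x\<in>M. measure P {w \<in> space P. Min ((\<lambda>i. norm (X i w - x)) ` {1..k}) > eps})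
         \<le> (1 - kappa * eps powr b *
               (INF x\<in>M. INF e\<in>{0<..<eps0}. measure nu (cball x e \<inter> M) / e powr b)) ^ k"
proof -
  have mu: "prob_space mu" and sets_mu: "sets mu = sets borel" and K: "\<forall>x. prob_space (K x)"
    using inv chain unfolding invariant_prob_def markov_chain_def by auto
  have M_borel: "M \<in> sets borel"
    using cpt by (simp add: compact_imp_closed)
  have start: "AE x in mu. x \<in> M"
    using AE_in_msupport[OF sets_mu] supp by simp
  then have "M \<noteq> {}"
    using mu prob_space.AE_False by force
  have "AE z in nu. z \<in> M"
    using nu_on_M M_borel nu_sets by (intro AE_I'[of "UNIV - M"]) (auto simp: null_sets_def)
  note kernel = density_kernel_bounds[OF K nu_sets this M_borel kd_meas dens kappa_lb kappa_pos]
  have stay: "\<forall>y\<in>M. AE z in K y. z \<in> M"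
    using kernel(1) by blast
  show ?thesis
    unfolding lower_volume_growth_def[symmetric]
  proof (rule cSUP_least[OF \<open>M \<noteq> {}\<close>])
    fix x assume x: "x \<in> M"
    define q where "q = 1 - kappa * measure nu (cball x eps \<inter> M)"
    have step: "\<forall>y\<in>M. measure (K y) (UNIV - cball x eps) \<le> q"
      unfolding q_def using kernel(2)[where C = "cball x eps"] by simp
    then have "0 \<le> q"
      using x by (meson measure_nonneg order_trans)
    have "measure P {w \<in> space P. Min ((\<lambda>i. norm (X i w - x)) ` {1..k}) > eps}
        = measure P {w \<in> space P. \<forall>i<k. X (Suc i) w \<in> UNIV - cball x eps}"
      unfolding Min_image_gt_iff[OF k] by (simp add: dist_norm norm_minus_commute not_le)
    also have "\<dots> \<le> q ^ k"
      by (rule markov_chain_prob_avoid_le[OF chain mu start stay step _ \<open>0 \<le> q\<close>]) simp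
    also have "\<dots> \<le> (1 - kappa * eps powr b * lower_volume_growth nu M b eps0) ^ k"
      using lower_volume_growth_le[OF x eps, of b nu] kappa_pos \<open>0 \<le> q\<close>
      unfolding q_def by (intro power_mono) (auto simp: mult.assoc)
    finally show "measure P {w \<in> space P. Min ((\<lambda>i. norm (X i w - x)) ` {1..k}) > eps}
        \<le> (1 - kappa * eps powr b * lower_volume_growth nu M b eps0) ^ k" .
  qed
qed

end
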